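(* For positive integers $\ell,m$, let $A(\ell,m)$ be the $(\ell+m)\times(\ell+m)$ coloring matrix with entries $a_{ij}=0$ if $i,j>\ell$ and $a_{ij}=1$ otherwise. Then for $1\le i\le\ell$, $$\ell^2F_{A(\ell,m)}^{(i)}(x)^3-2\ell F_{A(\ell,m)}^{(i)}(x)^2+((\ell-m)x+1)F_{A(\ell,m)}^{(i)}(x)-x=0,$$ and for $\ell+1\le i\le\ell+m$, $$mF_{A(\ell,m)}^{(i)}(x)^3+(\ell-m)xF_{A(\ell,m)}^{(i)}(x)^2-xF_{A(\ell,m)}^{(i)}(x)+x^2=0.$$
   Context: A plane tree is an unlabeled rooted tree in which the children of every vertex are linearly ordered. A coloring matrix is a square matrix $A=(a_{ij})$ with entries in $\{0,1\}$. An $A$-coloring of a plane tree assigns to each vertex a color (an index of a row of $A$) such that whenever a vertex of color $j$ is a child of a vertex of color $i$, $a_{ij}=1$. Let $t_A^{(i)}(n)$ be the number of pairs (plane tree with $n$ vertices, $A$-coloring of it) with root color $i$, and $F_A^{(i)}(x)=\sum_{n\ge1}t_A^{(i)}(n)x^n$ (formal power series). *)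

theory Defs
  imports Main "HOL-Computational_Algebra.Formal_Power_Series"
begin

datatype 'a ltree = LNode 'a "'a ltree list"

type_synonym plane_tree = "unit ltree"

fun num_vertices :: "'a ltree \<Rightarrow> nat" where
  "num_vertices (LNode a ts) = Suc (sum_list (map num_vertices ts))"

fun root_label :: "'a ltree \<Rightarrow> 'a" where
  "root_label (LNode a ts) = a"

definition shape :: "'a ltree \<Rightarrow> plane_tree" where
  "shape c = map_ltree (\<lambda>_. ()) c"

text \<open>A coloring matrix of size N is given by its entries a i j (i,j in {1..N}),
encoded as booleans (True = 1). A coloring of a plane tree t is a labelled
tree c with shape c = t; it is an A-coloring if all colors lie in {1..N} and
whenever a vertex of color j is a child of a vertex of color i, a i j = 1.\<close>
fun is_A_coloring :: "nat \<Rightarrow> (nat \<Rightarrow> nat \<Rightarrow> bool) \<Rightarrow> nat ltree \<Rightarrow> bool" where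
  "is_A_coloring N a (LNode i ts) =
     (i \<in> {1..N} \<and> (\<forall>s\<in>set ts. a i (root_label s) \<and> is_A_coloring N a s))"

definition t_A :: "nat \<Rightarrow> (nat \<Rightarrow> nat \<Rightarrow> bool) \<Rightarrow> nat \<Rightarrow> nat \<Rightarrow> nat" where
  "t_A N a i n = card {(t, c). num_vertices t = n \<and> shape c = t \<and>
                        is_A_coloring N a c \<and> root_label c = i}"

definition F_A :: "nat \<Rightarrow> (nat \<Rightarrow> nat \<Rightarrow> bool) \<Rightarrow> nat \<Rightarrow> int fps" where
  "F_A N a i = Abs_fps (\<lambda>n. if n \<ge> 1 then int (t_A N a i n) else 0)"

definition A_lm :: "nat \<Rightarrow> nat \<Rightarrow> nat \<Rightarrow> nat \<Rightarrow> bool" where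
  "A_lm l m i j = (\<not> (i > l \<and> j > l))"

end

theory Submission
  imports Defs
begin

(* Deleting the root of a tree with root color i leaves a sequence of colored trees whose
   root colors j all satisfy a i j; hence F_i = x + (\<Sum>_{a i j} F_j) F_i.  Such a fixed-point
   equation F = x + Q F with Q(0) = 0 has a unique solution, so colors with the same admissible
   children have the same series.  For A(l,m) this leaves f = F_1 and g = F_{l+1} with
   f = x + (l f + m g) f and g = x + l f g, and eliminating one of them gives the two cubics. *)

definition colored_trees :: "nat \<Rightarrow> (nat \<Rightarrow> nat \<Rightarrow> bool) \<Rightarrow> nat \<Rightarrow> nat \<Rightarrow> nat ltree set" where
  "colored_trees N a i n = {c. num_vertices c = n \<and> is_A_coloring N a c \<and> root_label c = i}"

definition colored_forests :: "nat \<Rightarrow> (nat \<Rightarrow> nat \<Rightarrow> bool) \<Rightarrow> nat \<Rightarrow> nat \<Rightarrow> nat ltree list set" where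
  "colored_forests N a i n = {cs. sum_list (map num_vertices cs) = n \<and>
       (\<forall>s\<in>set cs. a i (root_label s) \<and> is_A_coloring N a s)}"

definition children_colors :: "nat \<Rightarrow> (nat \<Rightarrow> nat \<Rightarrow> bool) \<Rightarrow> nat \<Rightarrow> nat set" where
  "children_colors N a i = {j\<in>{1..N}. a i j}"

definition forest_gf :: "nat \<Rightarrow> (nat \<Rightarrow> nat \<Rightarrow> bool) \<Rightarrow> nat \<Rightarrow> int fps" where
  "forest_gf N a i = Abs_fps (\<lambda>n. int (card (colored_forests N a i n)))"

lemma finite_children_colors [simp]: "finite (children_colors N a i)"
  by (simp add: children_colors_def)

lemma num_vertices_map_ltree [simp]: "num_vertices (map_ltree f t) = num_vertices t"
proof (induction t)
  case (LNode x ts)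
  then have "map (num_vertices \<circ> map_ltree f) ts = map num_vertices ts"
    by auto
  then show ?case
    by (simp del: map_map add: map_map[symmetric])
qed

lemma num_vertices_neq_0 [simp]: "num_vertices c \<noteq> 0"
  by (cases c) auto

lemma root_label_A_coloring: "is_A_coloring N a c \<Longrightarrow> root_label c \<in> {1..N}"
  by (cases c) auto

lemma t_A_eq_card_colored_trees: "t_A N a i n = card (colored_trees N a i n)"
proof -
  have "{(t, c). num_vertices t = n \<and> shape c = t \<and> is_A_coloring N a c \<and> root_label c = i}
        = (\<lambda>c. (shape c, c)) ` colored_trees N a i n"
    by (auto simp: colored_trees_def shape_def)
  moreover have "inj_on (\<lambda>c. (shape c, c)) (colored_trees N a i n)"
    by (rule inj_onI) auto
  ultimately show ?thesis
    unfolding t_A_def by (simp add: card_image)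
qed

lemma colored_trees_0 [simp]: "colored_trees N a i 0 = {}"
  by (auto simp: colored_trees_def)

lemma colored_trees_Suc:
  "colored_trees N a i (Suc n) = (if i \<in> {1..N} then LNode i ` colored_forests N a i n else {})"
proof -
  have "c \<in> LNode i ` colored_forests N a i n" if "c \<in> colored_trees N a i (Suc n)" for c
    using that by (cases c) (auto simp: colored_trees_def colored_forests_def)
  then show ?thesis
    using root_label_A_coloring
    by (auto simp: colored_trees_def colored_forests_def)
qed

lemma colored_forests_0: "colored_forests N a i 0 = {[]}"
  by (auto simp: colored_forests_def)

lemma colored_forests_eq_UN:
  assumes "n \<ge> 1"
  shows "colored_forests N a i n = (\<Union>(k, j)\<in>{1..n} \<times> children_colors N a i.
            (\<lambda>(s, cs). s # cs) ` (colored_trees N a j k \<times> colored_forests N a i (n - k)))"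
    (is "?L = ?R")
proof
  show "?L \<subseteq> ?R"
  proof
    fix cs assume cs: "cs \<in> ?L"
    then obtain s ss where cs_eq: "cs = s # ss"
      using assms by (cases cs) (auto simp: colored_forests_def)
    let ?k = "num_vertices s" and ?j = "root_label s"
    have "?k \<in> {1..n}"
      using cs cs_eq by (auto simp: colored_forests_def Suc_le_eq intro: gr0I)
    moreover have "?j \<in> children_colors N a i"
      using cs cs_eq root_label_A_coloring by (auto simp: colored_forests_def children_colors_def)
    moreover have "(s, ss) \<in> colored_trees N a ?j ?k \<times> colored_forests N a i (n - ?k)"
      using cs cs_eq by (auto simp: colored_forests_def colored_trees_def)
    ultimately show "cs \<in> ?R"
      using cs_eq by blast
  qed
  show "?R \<subseteq> ?L"
    by (auto simp: colored_forests_def colored_trees_def children_colors_def)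
qed

lemma finite_colored_forests: "finite (colored_forests N a i n)"
proof (induction n arbitrary: i rule: less_induct)
  case (less n)
  show ?case
  proof (cases "n = 0")
    case True
    then show ?thesis by (simp add: colored_forests_0)
  next
    case False
    have "finite (colored_trees N a j k \<times> colored_forests N a i (n - k))" if "k \<in> {1..n}" for j k
      using that less by (cases k) (auto simp: colored_trees_Suc)
    then show ?thesis
      using False by (subst colored_forests_eq_UN) auto
  qed
qed

lemma finite_colored_trees: "finite (colored_trees N a i n)"
  by (cases n) (auto simp: colored_trees_Suc finite_colored_forests)

lemma card_colored_forests:
  assumes "n \<ge> 1"
  shows "card (colored_forests N a i n) = (\<Sum>(k, j)\<in>{1..n} \<times> children_colors N a i.
            card (colored_trees N a j k) * card (colored_forests N a i (n - k)))"
proof -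
  let ?part = "\<lambda>(k, j). (\<lambda>(s, cs). s # cs) ` (colored_trees N a j k \<times> colored_forests N a i (n - k))"
  have "card (colored_forests N a i n) = (\<Sum>p\<in>{1..n} \<times> children_colors N a i. card (?part p))"
    unfolding colored_forests_eq_UN[OF assms]
  proof (rule card_UN_disjoint)
    show "\<forall>p\<in>{1..n} \<times> children_colors N a i. finite (?part p)"
      by (auto simp: finite_colored_trees finite_colored_forests)
    show "\<forall>p\<in>{1..n} \<times> children_colors N a i. \<forall>q\<in>{1..n} \<times> children_colors N a i.
            p \<noteq> q \<longrightarrow> ?part p \<inter> ?part q = {}"
      by (auto simp: colored_trees_def)
  qed simp
  also have "\<dots> = (\<Sum>(k, j)\<in>{1..n} \<times> children_colors N a i.
                    card (colored_trees N a j k) * card (colored_forests N a i (n - k)))"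
    by (rule sum.cong) (auto simp: card_image card_cartesian_product inj_on_def)
  finally show ?thesis .
qed

lemma fps_nth_F_A: "fps_nth (F_A N a i) n = int (card (colored_trees N a i n))"
  by (cases n) (auto simp: F_A_def t_A_eq_card_colored_trees)

lemma F_A_eq_X_mult_forest_gf: "i \<in> {1..N} \<Longrightarrow> F_A N a i = fps_X * forest_gf N a i"
  by (intro fps_ext)
    (auto simp: fps_nth_F_A forest_gf_def colored_trees_Suc gr0_conv_Suc
      card_image inj_on_def)

lemma forest_gf_eq: "forest_gf N a i = 1 + (\<Sum>j\<in>children_colors N a i. F_A N a j) * forest_gf N a i"
proof (rule fps_ext)
  fix n
  show "fps_nth (forest_gf N a i) n = fps_nth (1 + (\<Sum>j\<in>children_colors N a i. F_A N a j) * forest_gf N a i) n"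
  proof (cases "n = 0")
    case True
    then show ?thesis
      by (simp add: forest_gf_def colored_forests_0 fps_mult_nth fps_sum_nth fps_nth_F_A)
  next
    case False
    have "fps_nth (1 + (\<Sum>j\<in>children_colors N a i. F_A N a j) * forest_gf N a i) n
        = (\<Sum>k=0..n. (\<Sum>j\<in>children_colors N a i. int (card (colored_trees N a j k)))
             * int (card (colored_forests N a i (n - k))))"
      using False by (simp add: fps_mult_nth fps_sum_nth fps_nth_F_A forest_gf_def)
    also have "\<dots> = (\<Sum>k=0..n. \<Sum>j\<in>children_colors N a i.
             int (card (colored_trees N a j k)) * int (card (colored_forests N a i (n - k))))"
      by (simp add: sum_distrib_right)
    also have "\<dots> = (\<Sum>k=1..n. \<Sum>j\<in>children_colors N a i.
             int (card (colored_trees N a j k)) * int (card (colored_forests N a i (n - k))))"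
      by (simp add: sum.atLeast_Suc_atMost)
    also have "\<dots> = int (card (colored_forests N a i n))"
      using False by (simp add: card_colored_forests sum.cartesian_product case_prod_beta)
    finally show ?thesis
      by (simp add: forest_gf_def)
  qed
qed

lemma F_A_functional_equation:
  assumes "i \<in> {1..N}"
  shows "F_A N a i = fps_X + (\<Sum>j\<in>children_colors N a i. F_A N a j) * F_A N a i"
proof -
  let ?S = "\<Sum>j\<in>children_colors N a i. F_A N a j"
  have "fps_X + ?S * F_A N a i = fps_X * (1 + ?S * forest_gf N a i)"
    by (simp add: F_A_eq_X_mult_forest_gf[OF assms] algebra_simps)
  also have "\<dots> = F_A N a i"
    by (simp only: forest_gf_eq[symmetric] F_A_eq_X_mult_forest_gf[OF assms])
  finally show ?thesis
    by (rule sym)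
qed

lemma fps_fixpoint_unique:
  fixes Q F G :: "'a::idom fps"
  assumes "fps_nth Q 0 = 0" and "F = fps_X + Q * F" and "G = fps_X + Q * G"
  shows "F = G"
proof -
  have "(1 - Q) * (F - G) = (F - Q * F) - (G - Q * G)"
    by (simp add: algebra_simps)
  also have "\<dots> = 0"
    using assms(2,3) by (metis add_diff_cancel_right' diff_self)
  finally have "(1 - Q) * (F - G) = 0" .
  moreover have "1 - Q \<noteq> 0"
  proof
    assume "1 - Q = 0"
    then have "fps_nth (1 - Q) 0 = 0" by simp
    then show False using assms(1) by simp
  qed
  ultimately show ?thesis
    by simp
qed

lemma F_A_eq_if_same_children_colors:
  assumes "i \<in> {1..N}" and "i' \<in> {1..N}" and "children_colors N a i = children_colors N a i'"
  shows "F_A N a i = F_A N a i'"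
proof (rule fps_fixpoint_unique)
  show "fps_nth (\<Sum>j\<in>children_colors N a i. F_A N a j) 0 = 0"
    by (simp add: fps_sum_nth fps_nth_F_A)
  show "F_A N a i = fps_X + (\<Sum>j\<in>children_colors N a i. F_A N a j) * F_A N a i"
    using assms(1) by (rule F_A_functional_equation)
  show "F_A N a i' = fps_X + (\<Sum>j\<in>children_colors N a i. F_A N a j) * F_A N a i'"
    using F_A_functional_equation[OF assms(2)] unfolding assms(3) .
qed

lemma children_colors_A_lm:
  "children_colors (l + m) (A_lm l m) i = (if i \<le> l then {1..l + m} else {1..l})"
  by (auto simp: children_colors_def A_lm_def)

lemma low_block_cubic:
  fixes L M X f g :: "'a::comm_ring_1"
  assumes f: "f = X + (L * f + M * g) * f" and g: "g = X + L * f * g"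
  shows "L^2 * f^3 - 2 * L * f^2 + ((L - M) * X + 1) * f - X = 0"
proof -
  have "L^2 * f^3 - 2 * L * f^2 + ((L - M) * X + 1) * f - X
      = (1 - L * f) * (f - X - (L * f + M * g) * f) + M * f * (g - X - L * f * g)"
    by (simp add: algebra_simps power2_eq_square power3_eq_cube)
  also have "\<dots> = 0"
    using f g by (metis diff_diff_eq diff_self mult_zero_right add.right_neutral)
  finally show ?thesis .
qed

lemma high_block_cubic:
  fixes L M X f g :: "'a::idom"
  assumes "X \<noteq> 0" and f: "f = X + (L * f + M * g) * f" and g: "g = X + L * f * g"
  shows "M * g^3 + (L - M) * X * g^2 - X * g + X^2 = 0"
proof -
  have Lfg: "L * f * g = g - X"
    using g by (simp add: algebra_simps)
  have "- X * (M * g^3 + (L - M) * X * g^2 - X * g + X^2)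
      = (g - X)^3 - 2 * g * (g - X)^2 + g^2 * (g - X) + (L - M) * X * g^2 * (g - X) - L * X * g^3"
    by (simp add: algebra_simps power2_eq_square power3_eq_cube)
  also have "\<dots> = (L * f * g)^3 - 2 * g * (L * f * g)^2 + g^2 * (L * f * g)
      + (L - M) * X * g^2 * (L * f * g) - L * X * g^3"
    by (simp only: Lfg)
  also have "\<dots> = g^3 * L * (L^2 * f^3 - 2 * L * f^2 + ((L - M) * X + 1) * f - X)"
    by (simp add: algebra_simps power2_eq_square power3_eq_cube)
  also have "\<dots> = 0"
    using low_block_cubic[OF f g] by simp
  finally show ?thesis
    using \<open>X \<noteq> 0\<close> by simp
qed

lemma F_A_A_lm_low_block: "i \<in> {1..l} \<Longrightarrow> F_A (l + m) (A_lm l m) i = F_A (l + m) (A_lm l m) 1"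
  by (intro F_A_eq_if_same_children_colors) (auto simp: children_colors_A_lm)

lemma F_A_A_lm_high_block:
  "i \<in> {l + 1..l + m} \<Longrightarrow> F_A (l + m) (A_lm l m) i = F_A (l + m) (A_lm l m) (l + 1)"
  by (intro F_A_eq_if_same_children_colors) (auto simp: children_colors_A_lm)

lemma F_A_A_lm_system:
  fixes l m :: nat
  assumes "l \<ge> 1" and "m \<ge> 1"
  defines "f \<equiv> F_A (l + m) (A_lm l m) 1" and "g \<equiv> F_A (l + m) (A_lm l m) (l + 1)"
  shows "f = fps_X + (fps_const (int l) * f + fps_const (int m) * g) * f"
    and "g = fps_X + fps_const (int l) * f * g"
proof -
  let ?F = "F_A (l + m) (A_lm l m)"
  have "(\<Sum>j\<in>{1..l}. ?F j) = (\<Sum>j\<in>{1..l}. f)"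
    unfolding f_def by (rule sum.cong[OF refl F_A_A_lm_low_block])
  then have sum_low: "(\<Sum>j\<in>{1..l}. ?F j) = fps_const (int l) * f"
    by (simp add: fps_of_nat)
  have "(\<Sum>j\<in>{l + 1..l + m}. ?F j) = (\<Sum>j\<in>{l + 1..l + m}. g)"
    unfolding g_def by (rule sum.cong[OF refl F_A_A_lm_high_block])
  then have sum_high: "(\<Sum>j\<in>{l + 1..l + m}. ?F j) = fps_const (int m) * g"
    by (simp add: fps_of_nat)
  have sum_all: "(\<Sum>j\<in>{1..l + m}. ?F j) = fps_const (int l) * f + fps_const (int m) * g"
    unfolding sum.ub_add_nat[of 1 l, OF le_add2] sum_low sum_high ..
  have children_low: "children_colors (l + m) (A_lm l m) 1 = {1..l + m}"
    and children_high: "children_colors (l + m) (A_lm l m) (l + 1) = {1..l}"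
    using assms by (simp_all add: children_colors_A_lm)
  have "1 \<in> {1..l + m}" and "l + 1 \<in> {1..l + m}"
    using assms by auto
  note functional_equations =
    this[THEN F_A_functional_equation[of _ "l + m" "A_lm l m"], folded f_def g_def]
  show "f = fps_X + (fps_const (int l) * f + fps_const (int m) * g) * f"
    using functional_equations(1) unfolding children_low sum_all .
  show "g = fps_X + fps_const (int l) * f * g"
    using functional_equations(2) unfolding children_high sum_low mult.assoc .
qed

theorem theorem34:
  fixes l m :: nat
  assumes "l \<ge> 1" and "m \<ge> 1"
  shows "(\<forall>i. 1 \<le> i \<and> i \<le> l \<longrightarrow>
           (let F = F_A (l + m) (A_lm l m) i in
              fps_const (int l ^ 2) * F ^ 3 - fps_const (2 * int l) * F ^ 2
              + (fps_const (int l - int m) * fps_X + 1) * F - fps_X = 0)) \<and>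
         (\<forall>i. l + 1 \<le> i \<and> i \<le> l + m \<longrightarrow>
           (let F = F_A (l + m) (A_lm l m) i in
              fps_const (int m) * F ^ 3 + fps_const (int l - int m) * fps_X * F ^ 2
              - fps_X * F + fps_X ^ 2 = 0))"
proof -
  let ?F = "F_A (l + m) (A_lm l m)"
  define f where "f = ?F 1"
  define g where "g = ?F (l + 1)"
  note system = F_A_A_lm_system[OF assms, folded f_def g_def]
  have "?F i = f" if "1 \<le> i \<and> i \<le> l" for i
    unfolding f_def using that by (intro F_A_A_lm_low_block) simp
  moreover have "?F i = g" if "l + 1 \<le> i \<and> i \<le> l + m" for i
    unfolding g_def using that by (intro F_A_A_lm_high_block) simp
  ultimately show ?thesis
    using low_block_cubic[OF system] high_block_cubic[OF fps_X_neq_zero system]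
    by (simp add: Let_def numeral_fps_const)
qed

end
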